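(* Let $i$ be a positive integer and let $C$ be an $\mathbb{F}$-linear $[n,k,d]$-code with ordered basis $B$. (a) ${\sf Code}(B,i)$ is an $\mathbb{F}$-linear $[n_i,k_i,d_i]$-code with \[ n_i=n\prod_{j=1}^{i}(k+j),\qquad k_i=k+i,\qquad d_i\ge d\prod_{j=1}^{i}(k+j-1). \] (b) Suppose that $C$ is $u$-bounded relative to $B$ for a positive integer $u$ satisfying $u\ge d(1+ik^{-1})$. Then \[ d_i=d\prod_{j=1}^{i}(k+j). \] Moreover, setting $u_i=u\prod_{j=1}^{i}(k+j-1)$, the code ${\sf Code}(B,i)$ is $u_i$-bounded relative to ${\sf Basis}(B,i)$ if and only if $u\ge d(1+(i+1)k^{-1})$.
   Context: $\mathbb{F}$ is an arbitrary field and vectors in $\mathbb{F}^n$ are column vectors. The weight $\mathrm{wt}(x)$ of $x\in\mathbb{F}^n$ is its number of nonzero coordinates. An $[n,k,d]$-code is a $k$-dimensional subspace of $\mathbb{F}^n$ whose minimum distance (the minimum weight of a nonzero codeword) is $d$. Boundedness: let $u$ be a positive integer and let $C$ be an $[n,k,d]$-code with ordered basis $B=(a_1,\dots,a_k)$. Then $C$ is $u$-bounded relative to $B$ if all three of the following hold: (i) $\mathrm{wt}(a_j)=u$ for every $j$; (ii) $\mathrm{wt}\big(\sum_{j=1}^k a_j\big)=d$; (iii) $u\ge d(1+k^{-1})$. Construction: for an ordered basis $B=(a_1,\dots,a_k)$ of a code $C\le\mathbb{F}^n$, set $a_0:=0\in\mathbb{F}^n$. For $m=1,\dots,k+1$,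 let $a'_m\in\mathbb{F}^{n(k+1)}$ be the column vector made of $k+1$ blocks of length $n$. Its $r$-th block, for $r=1,\dots,k+1$, is $a_{r-m}$, where the subscript is read modulo $k+1$ with representatives in $\{0,\dots,k\}$. Thus $a'_1=(0,a_1,\dots,a_k)^T$, $a'_2=(a_k,0,a_1,\dots,a_{k-1})^T$, …, $a'_{k+1}=(a_1,\dots,a_k,0)^T$ in block form. Define ${\sf Basis}(B)=(a'_1,\dots,a'_{k+1})$, and let ${\sf Code}(B)\le\mathbb{F}^{n(k+1)}$ be its $\mathbb{F}$-linear span. ${\sf Basis}(B)$ is an ordered basis of ${\sf Code}(B)$. Iteration: ${\sf Code}(B,1)={\sf Code}(B)$ and ${\sf Basis}(B,1)={\sf Basis}(B)$. For $i\ge2$, ${\sf Code}(B,i)={\sf Code}({\sf Basis}(B,i-1))$ and ${\sf Basis}(B,i)={\sf Basis}({\sf Basis}(B,i-1))$. *)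

theory Defs
  imports Complex_Main
begin

text \<open>Vectors of F^n are represented as lists of length n over a field 'a.\<close>

definition vadd :: "'a::field list \<Rightarrow> 'a list \<Rightarrow> 'a list" where
  "vadd x y = map2 (+) x y"

definition smult :: "'a::field \<Rightarrow> 'a list \<Rightarrow> 'a list" where
  "smult c x = map ((*) c) x"

definition vzero :: "nat \<Rightarrow> 'a::field list" where
  "vzero n = replicate n 0"

definition lincomb :: "nat \<Rightarrow> 'a::field list \<Rightarrow> 'a list list \<Rightarrow> 'a list" where
  "lincomb n cs vs = foldr vadd (map2 smult cs vs) (vzero n)"

definition span :: "nat \<Rightarrow> 'a::field list list \<Rightarrow> 'a list set" where
  "span n vs = {lincomb n cs vs | cs. length cs = length vs}"

definition lin_indep :: "nat \<Rightarrow> 'a::field list list \<Rightarrow> bool" where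
  "lin_indep n vs \<longleftrightarrow>
     (\<forall>cs. length cs = length vs \<and> lincomb n cs vs = vzero n \<longrightarrow> (\<forall>c\<in>set cs. c = 0))"

definition vsum :: "nat \<Rightarrow> 'a::field list list \<Rightarrow> 'a list" where
  "vsum n vs = foldr vadd vs (vzero n)"

definition wt :: "'a::zero list \<Rightarrow> nat" where
  "wt x = card {j. j < length x \<and> x ! j \<noteq> 0}"

definition min_dist :: "'a::zero list set \<Rightarrow> nat" where
  "min_dist C = Min {wt x | x. x \<in> C \<and> (\<exists>c\<in>set x. c \<noteq> 0)}"

definition is_ordered_basis :: "nat \<Rightarrow> 'a::field list set \<Rightarrow> 'a list list \<Rightarrow> bool" where
  "is_ordered_basis n C B \<longleftrightarrow>
     (\<forall>b\<in>set B. length b = n) \<and> lin_indep n B \<and> span n B = C"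

definition is_lin_code :: "nat \<Rightarrow> nat \<Rightarrow> nat \<Rightarrow> 'a::field list set \<Rightarrow> bool" where
  "is_lin_code n k d C \<longleftrightarrow>
     (\<exists>B. length B = k \<and> is_ordered_basis n C B) \<and> min_dist C = d"

definition is_bounded :: "nat \<Rightarrow> nat \<Rightarrow> nat \<Rightarrow> 'a::field list list \<Rightarrow> bool" where
  "is_bounded n d u B \<longleftrightarrow>
     (\<forall>a\<in>set B. wt a = u) \<and> wt (vsum n B) = d \<and>
     real u \<ge> real d * (1 + 1 / real (length B))"

text \<open>The construction Basis(B): a_0 = 0, and a'_m has r-th block a_{(r-m) mod (k+1)}.\<close>
definition basis_step :: "'a::field list list \<Rightarrow> 'a list list" where
  "basis_step B =
     (let k = length B;
          a = (\<lambda>j. if j = 0 then vzero (length (hd B)) else B ! (j - 1))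
      in map (\<lambda>m. concat (map (\<lambda>r. a ((r + (k + 1) - m) mod (k + 1))) [1..<k+2])) [1..<k+2])"

definition Basis_it :: "'a::field list list \<Rightarrow> nat \<Rightarrow> 'a list list" where
  "Basis_it B i = (basis_step ^^ i) B"

definition Code_it :: "'a::field list list \<Rightarrow> nat \<Rightarrow> 'a list set" where
  "Code_it B i = span (length (hd (Basis_it B i))) (Basis_it B i)"

end

(*
  Write a codeword of Code(B) as x = \<Sum>m c_m a'_m. Its r-th block is \<Sum>j c_((r-j) mod (k+1)) a_j,
  the codeword of C whose coefficients are those of c with c_r deleted and the rest rotated.
  Consequently Basis(B) is linearly independent, and if c_m \<noteq> 0 then every block except possibly
  the m-th is a nonzero codeword of C, so wt x \<ge> k d. If c has two nonzero entries, all k+1 blocks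
  are nonzero and wt x \<ge> (k+1) d; otherwise x is a multiple of a single a'_m, of weight k u when
  all a_j have weight u. The sum of Basis(B) is k+1 copies of the sum of B (of weight d if C is
  u-bounded).
  Iterating, at step t < i the bound u \<ge> d (1 + i/k) makes (k+t+1) d_t the smaller of the two
  estimates, so d_i = d \<Prod>(k+j) is attained by the sum of Basis(B,i); and u_i \<ge> d_i (1 + 1/(k+i))
  unwinds to u \<ge> d (1 + (i+1)/k).
*)

theory Submission
  imports Defs
begin

definition nonzero_vec :: "'a::zero list \<Rightarrow> bool" where
  "nonzero_vec x \<longleftrightarrow> (\<exists>c\<in>set x. c \<noteq> 0)"

lemma lincomb_Cons: "lincomb n (c # cs) (v # vs) = vadd (smult c v) (lincomb n cs vs)"
  by (simp add: lincomb_def)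

lemma length_lincomb:
  "\<forall>v\<in>set vs. length v = n \<Longrightarrow> length cs = length vs \<Longrightarrow> length (lincomb n cs vs) = n"
proof (induction vs arbitrary: cs)
  case (Cons v vs)
  then show ?case by (cases cs) (auto simp: lincomb_Cons vadd_def smult_def)
qed (simp add: lincomb_def vzero_def)

lemma nth_lincomb:
  "\<forall>v\<in>set vs. length v = n \<Longrightarrow> length cs = length vs \<Longrightarrow> p < n \<Longrightarrow>
   lincomb n cs vs ! p = (\<Sum>j<length vs. cs ! j * vs ! j ! p)"
proof (induction vs arbitrary: cs)
  case (Cons v vs)
  then obtain c cs' where "cs = c # cs'" by (cases cs) auto
  with Cons show ?case
    by (simp add: lincomb_Cons vadd_def smult_def length_lincomb sum.lessThan_Suc_shift
        del: sum.lessThan_Suc)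
qed (simp add: lincomb_def vzero_def)

lemma vsum_eq_lincomb_ones: "vsum n vs = lincomb n (replicate (length vs) 1) vs"
proof -
  have "smult 1 v = v" for v :: "'a list" by (induction v) (simp_all add: smult_def)
  then show ?thesis by (induction vs) (simp_all add: vsum_def lincomb_def)
qed

lemma lincomb_eq_smult_nth:
  assumes "\<forall>v\<in>set vs. length v = n" "length cs = length vs" "m < length vs"
    and "\<forall>j<length vs. j \<noteq> m \<longrightarrow> cs ! j = 0"
  shows "lincomb n cs vs = smult (cs ! m) (vs ! m)"
proof (rule nth_equalityI)
  have "length (vs ! m) = n" using assms(1,3) by simp
  then show "length (lincomb n cs vs) = length (smult (cs ! m) (vs ! m))"
    using length_lincomb[OF assms(1,2)] by (simp add: smult_def)
  fix p assume "p < length (lincomb n cs vs)"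
  then have p: "p < n" using length_lincomb[OF assms(1,2)] by simp
  have "lincomb n cs vs ! p = cs ! m * vs ! m ! p + (\<Sum>j\<in>{..<length vs} - {m}. cs ! j * vs ! j ! p)"
    unfolding nth_lincomb[OF assms(1,2) p] using assms(3) by (intro sum.remove) auto
  also have "\<dots> = cs ! m * vs ! m ! p" using assms(4) by simp
  finally show "lincomb n cs vs ! p = smult (cs ! m) (vs ! m) ! p"
    using p assms(1,3) by (simp add: smult_def)
qed

lemma wt_eq_length_filter: "wt x = length (filter (\<lambda>c. c \<noteq> 0) x)"
  by (simp add: wt_def length_filter_conv_card)

lemma wt_concat: "wt (concat xs) = (\<Sum>x\<leftarrow>xs. wt x)"
  by (induction xs) (simp_all add: wt_eq_length_filter)

lemma wt_concat_map_upt: "wt (concat (map f [0..<m])) = (\<Sum>r<m. wt (f r))"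
  by (simp add: wt_concat sum_list_sum_nth atLeast0LessThan)

lemma wt_le_length: "wt x \<le> length x"
  by (simp add: wt_eq_length_filter)

lemma wt_smult: "c \<noteq> 0 \<Longrightarrow> wt (smult c x) = wt x"
  by (simp add: wt_eq_length_filter smult_def filter_map comp_def)

lemma wt_vzero: "wt (vzero n) = 0"
  by (simp add: wt_eq_length_filter vzero_def)

lemma nonzero_concat: "nonzero_vec (concat xs) \<longleftrightarrow> (\<exists>x\<in>set xs. nonzero_vec x)"
  by (auto simp: nonzero_vec_def)

lemma nonzero_vec_iff_ne_vzero: "length x = n \<Longrightarrow> nonzero_vec x \<longleftrightarrow> x \<noteq> vzero n"
  unfolding nonzero_vec_def vzero_def by (metis in_set_replicate replicate_length_same)

lemma length_concat_equal_blocks: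
  "\<forall>x\<in>set xs. length x = n \<Longrightarrow> length (concat xs) = n * length xs"
  by (induction xs) auto

lemma nth_concat_equal_blocks:
  assumes "\<forall>x\<in>set xs. length x = n" "q < n * length xs"
  shows "concat xs ! q = xs ! (q div n) ! (q mod n)"
  using assms
proof (induction xs arbitrary: q)
  case (Cons x xs)
  then have "length x = n" "0 < n" by (auto intro: gr0I)
  show ?case
  proof (cases "q < n")
    case False
    then have "concat xs ! (q - n) = xs ! ((q - n) div n) ! ((q - n) mod n)"
      using Cons by auto
    moreover have "q div n = Suc ((q - n) div n)" "(q - n) mod n = q mod n"
      using False \<open>0 < n\<close> by (simp_all add: le_div_geq le_mod_geq)
    ultimately show ?thesis using False \<open>length x = n\<close> by (simp add: nth_append)
  qed (use \<open>length x = n\<close> in \<open>simp add: nth_append\<close>)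
qed simp

lemma mem_span_iff: "x \<in> span n vs \<longleftrightarrow> (\<exists>cs. length cs = length vs \<and> x = lincomb n cs vs)"
  by (auto simp: span_def)

lemma length_mem_span: "\<forall>v\<in>set vs. length v = n \<Longrightarrow> x \<in> span n vs \<Longrightarrow> length x = n"
  by (auto simp: mem_span_iff length_lincomb)

lemma lincomb_nonzero_iff:
  assumes "\<forall>v\<in>set vs. length v = n" "length cs = length vs" "lin_indep n vs"
  shows "nonzero_vec (lincomb n cs vs) \<longleftrightarrow> (\<exists>j<length vs. cs ! j \<noteq> 0)"
proof
  assume nonzero: "nonzero_vec (lincomb n cs vs)"
  show "\<exists>j<length vs. cs ! j \<noteq> 0"
  proof (rule ccontr)
    assume "\<not> (\<exists>j<length vs. cs ! j \<noteq> 0)"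
    then have "\<forall>p<n. lincomb n cs vs ! p = 0" by (simp add: nth_lincomb[OF assms(1,2)])
    then show False
      using nonzero length_lincomb[OF assms(1,2)] by (auto simp: nonzero_vec_def in_set_conv_nth)
  qed
next
  assume "\<exists>j<length vs. cs ! j \<noteq> 0"
  then have "\<not> (\<forall>c\<in>set cs. c = 0)" using assms(2) by (metis nth_mem)
  then have "lincomb n cs vs \<noteq> vzero n" using assms(2,3) by (auto simp: lin_indep_def)
  then show "nonzero_vec (lincomb n cs vs)"
    using nonzero_vec_iff_ne_vzero length_lincomb[OF assms(1,2)] by blast
qed

lemma vsum_mem_span: "vsum n vs \<in> span n vs"
  unfolding mem_span_iff vsum_eq_lincomb_ones by (metis length_replicate)

lemma nonzero_vsum:
  "\<forall>v\<in>set vs. length v = n \<Longrightarrow> lin_indep n vs \<Longrightarrow> vs \<noteq> [] \<Longrightarrow> nonzero_vec (vsum n vs)"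
  by (simp add: vsum_eq_lincomb_ones lincomb_nonzero_iff)
    (metis length_greater_0_conv nth_replicate one_neq_zero)

lemma finite_wt_image: "\<forall>x\<in>C. length x = n \<Longrightarrow> finite (wt ` C)"
  by (rule finite_subset[of _ "{..n}"]) (auto intro: wt_le_length[THEN order_trans])

lemma min_dist_eq_Min: "min_dist C = Min (wt ` {x \<in> C. nonzero_vec x})"
  unfolding min_dist_def nonzero_vec_def by (simp add: image_def) meson

lemma min_dist_le_wt:
  "\<forall>x\<in>C. length x = n \<Longrightarrow> x \<in> C \<Longrightarrow> nonzero_vec x \<Longrightarrow> min_dist C \<le> wt x"
  unfolding min_dist_eq_Min by (rule Min_le) (auto intro: finite_subset[OF _ finite_wt_image])

lemma le_min_dist:
  assumes "\<forall>x\<in>C. length x = n" "x \<in> C" "nonzero_vec x"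
    and "\<forall>y\<in>C. nonzero_vec y \<longrightarrow> e \<le> wt y"
  shows "e \<le> min_dist C"
  unfolding min_dist_eq_Min using assms
  by (subst Min_ge_iff) (auto intro: finite_subset[OF _ finite_wt_image])

text \<open>(r - m) mod K for r, m < K, avoiding truncated subtraction. Indexing blocks and basis
  vectors from 0, the r-th block of a'_m is a_(cyclic_diff (k+1) r m).\<close>
definition cyclic_diff :: "nat \<Rightarrow> nat \<Rightarrow> nat \<Rightarrow> nat" where
  "cyclic_diff K r m = (r + K - m) mod K"

lemma cyclic_diff_eq:
  "r < K \<Longrightarrow> m < K \<Longrightarrow> cyclic_diff K r m = (if m \<le> r then r - m else r + K - m)"
  by (auto simp: cyclic_diff_def le_mod_geq)

lemma cyclic_diff_less: "0 < K \<Longrightarrow> cyclic_diff K r m < K"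
  by (simp add: cyclic_diff_def)

lemma cyclic_diff_eq_0_iff: "r < K \<Longrightarrow> m < K \<Longrightarrow> cyclic_diff K r m = 0 \<longleftrightarrow> m = r"
  by (auto simp: cyclic_diff_eq)

lemma cyclic_diff_cyclic_diff: "r < K \<Longrightarrow> m < K \<Longrightarrow> cyclic_diff K r (cyclic_diff K r m) = m"
  by (auto simp: cyclic_diff_eq)

lemma bij_betw_cyclic_diff: "r < K \<Longrightarrow> bij_betw (cyclic_diff K r) {..<K} {..<K}"
  by (rule bij_betw_byWitness[where f' = "cyclic_diff K r"])
    (auto simp: cyclic_diff_cyclic_diff cyclic_diff_less)

definition block_coeffs :: "nat \<Rightarrow> 'a list \<Rightarrow> nat \<Rightarrow> 'a list" where
  "block_coeffs k cs r = map (\<lambda>j. cs ! cyclic_diff (Suc k) r (Suc j)) [0..<k]"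

locale code_basis =
  fixes B :: "'a::field list list" and n k :: nat
  assumes length_B: "length B = k" and k_pos: "0 < k"
    and length_basis_vecs: "\<forall>b\<in>set B. length b = n"
    and lin_indep_B: "lin_indep n B"
begin

declare upt_Suc [simp del]

lemma length_hd_B: "length (hd B) = n"
  using length_B k_pos length_basis_vecs by (cases B) auto

definition basis_vec :: "nat \<Rightarrow> 'a list" where
  "basis_vec j = (if j = 0 then vzero n else B ! (j - 1))"

lemma length_basis_vec: "j \<le> k \<Longrightarrow> length (basis_vec j) = n"
  using length_B length_basis_vecs by (auto simp: basis_vec_def vzero_def)

lemma length_basis_step: "length (basis_step B) = Suc k"
  by (simp add: basis_step_def Let_def length_B)

lemma basis_step_nth:
  assumes "m < Suc k"
  shows "basis_step B ! m = concat (map (\<lambda>r. basis_vec (cyclic_diff (Suc k) r m)) [0..<Suc k])"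
proof -
  have "[1..<k + 2] = map Suc [0..<Suc k]" by (simp add: map_Suc_upt)
  then show ?thesis
    using assms
    by (simp add: basis_step_def Let_def length_B length_hd_B basis_vec_def cyclic_diff_def
        comp_def cong: if_cong)
qed

lemma length_basis_step_blocks:
  "m < Suc k \<Longrightarrow> \<forall>x\<in>set (map (\<lambda>r. basis_vec (cyclic_diff (Suc k) r m)) [0..<Suc k]). length x = n"
  by (auto simp: length_basis_vec cyclic_diff_less less_Suc_eq_le[symmetric])

lemma length_basis_step_elems: "\<forall>b\<in>set (basis_step B). length b = n * Suc k"
proof
  fix b assume "b \<in> set (basis_step B)"
  then obtain m where "m < Suc k" "b = basis_step B ! m"
    by (auto simp: in_set_conv_nth length_basis_step)
  then show "length b = n * Suc k"
    using length_concat_equal_blocks[OF length_basis_step_blocks] by (simp add: basis_step_nth)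
qed

lemma nth_basis_step_nth:
  assumes "m < Suc k" "q < n * Suc k"
  shows "basis_step B ! m ! q = basis_vec (cyclic_diff (Suc k) (q div n) m) ! (q mod n)"
proof -
  have "q div n < Suc k" using assms(2) by (simp add: less_mult_imp_div_less mult.commute)
  then show ?thesis
    using assms nth_concat_equal_blocks[OF length_basis_step_blocks] by (simp add: basis_step_nth)
qed

lemma sum_basis_vec_cyclic_diff:
  assumes r: "r < Suc k" and p: "p < n"
  shows "(\<Sum>m<Suc k. cs ! m * basis_vec (cyclic_diff (Suc k) r m) ! p)
    = (\<Sum>j<k. block_coeffs k cs r ! j * B ! j ! p)"
proof -
  have "(\<Sum>m<Suc k. cs ! m * basis_vec (cyclic_diff (Suc k) r m) ! p)
      = (\<Sum>s<Suc k. cs ! cyclic_diff (Suc k) r s * basis_vec s ! p)"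
    by (rule sum.reindex_bij_betw[OF bij_betw_cyclic_diff[OF r], symmetric, THEN trans])
      (simp add: cyclic_diff_cyclic_diff[OF r])
  also have "\<dots> = (\<Sum>j<k. cs ! cyclic_diff (Suc k) r (Suc j) * B ! j ! p)"
    using p by (simp add: sum.lessThan_Suc_shift basis_vec_def vzero_def del: sum.lessThan_Suc)
  finally show ?thesis by (simp add: block_coeffs_def)
qed

lemma length_block_coeffs: "length (block_coeffs k cs r) = length B"
  by (simp add: block_coeffs_def length_B)

lemma nth_block_coeffs: "j < k \<Longrightarrow> block_coeffs k cs r ! j = cs ! cyclic_diff (Suc k) r (Suc j)"
  by (simp add: block_coeffs_def)

lemma lincomb_basis_step:
  assumes cs: "length cs = Suc k"
  shows "lincomb (n * Suc k) cs (basis_step B)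
    = concat (map (\<lambda>r. lincomb n (block_coeffs k cs r) B) [0..<Suc k])"
proof (rule nth_equalityI)
  have cs': "length cs = length (basis_step B)" using cs by (simp add: length_basis_step)
  have blocks: "\<forall>x\<in>set (map (\<lambda>r. lincomb n (block_coeffs k cs r) B) [0..<Suc k]). length x = n"
    by (simp add: length_lincomb[OF length_basis_vecs] length_block_coeffs)
  show "length (lincomb (n * Suc k) cs (basis_step B))
    = length (concat (map (\<lambda>r. lincomb n (block_coeffs k cs r) B) [0..<Suc k]))"
    using length_lincomb[OF length_basis_step_elems cs'] length_concat_equal_blocks[OF blocks]
    by simp
  fix q assume "q < length (lincomb (n * Suc k) cs (basis_step B))"
  then have q: "q < n * Suc k" using length_lincomb[OF length_basis_step_elems cs'] by simp
  then have "0 < n" by (cases n) simp_all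
  then have r: "q div n < Suc k" and p: "q mod n < n"
    using q by (simp_all add: less_mult_imp_div_less mult.commute)
  have "lincomb (n * Suc k) cs (basis_step B) ! q = (\<Sum>m<Suc k. cs ! m * basis_step B ! m ! q)"
    using nth_lincomb[OF length_basis_step_elems cs' q] by (simp add: length_basis_step)
  also have "\<dots> = (\<Sum>m<Suc k. cs ! m * basis_vec (cyclic_diff (Suc k) (q div n) m) ! (q mod n))"
    using q by (intro sum.cong) (simp_all add: nth_basis_step_nth)
  also have "\<dots> = (\<Sum>j<k. block_coeffs k cs (q div n) ! j * B ! j ! (q mod n))"
    by (rule sum_basis_vec_cyclic_diff[OF r p])
  also have "\<dots> = concat (map (\<lambda>r. lincomb n (block_coeffs k cs r) B) [0..<Suc k]) ! q"
    using nth_concat_equal_blocks[OF blocks] q r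
    by (simp add: nth_lincomb[OF length_basis_vecs length_block_coeffs p] length_B)
  finally show "lincomb (n * Suc k) cs (basis_step B) ! q
    = concat (map (\<lambda>r. lincomb n (block_coeffs k cs r) B) [0..<Suc k]) ! q" .
qed

lemma block_nonzero_iff:
  assumes r: "r < Suc k"
  shows "nonzero_vec (lincomb n (block_coeffs k cs r) B) \<longleftrightarrow> (\<exists>m<Suc k. m \<noteq> r \<and> cs ! m \<noteq> 0)"
proof -
  have "nonzero_vec (lincomb n (block_coeffs k cs r) B)
      \<longleftrightarrow> (\<exists>j<k. cs ! cyclic_diff (Suc k) r (Suc j) \<noteq> 0)"
    using lincomb_nonzero_iff[OF length_basis_vecs length_block_coeffs lin_indep_B]
    by (auto simp: nth_block_coeffs length_B)
  also have "\<dots> \<longleftrightarrow> (\<exists>m<Suc k. m \<noteq> r \<and> cs ! m \<noteq> 0)"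
  proof
    assume "\<exists>j<k. cs ! cyclic_diff (Suc k) r (Suc j) \<noteq> 0"
    then obtain j where "j < k" "cs ! cyclic_diff (Suc k) r (Suc j) \<noteq> 0" by blast
    moreover have "cyclic_diff (Suc k) r (Suc j) \<noteq> r"
      using cyclic_diff_cyclic_diff[OF r, of "Suc j"] cyclic_diff_eq_0_iff[OF r r] \<open>j < k\<close>
      by auto
    ultimately show "\<exists>m<Suc k. m \<noteq> r \<and> cs ! m \<noteq> 0"
      using cyclic_diff_less[of "Suc k"] by blast
  next
    assume "\<exists>m<Suc k. m \<noteq> r \<and> cs ! m \<noteq> 0"
    then obtain m where m: "m < Suc k" "m \<noteq> r" "cs ! m \<noteq> 0" by blast
    then obtain j where "cyclic_diff (Suc k) r m = Suc j"
      using cyclic_diff_eq_0_iff[OF r] not0_implies_Suc by blast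
    moreover have "j < k" using cyclic_diff_less[of "Suc k" r m] calculation by simp
    ultimately show "\<exists>j<k. cs ! cyclic_diff (Suc k) r (Suc j) \<noteq> 0"
      using m cyclic_diff_cyclic_diff[OF r m(1)] by metis
  qed
  finally show ?thesis .
qed

lemma lin_indep_basis_step: "lin_indep (n * Suc k) (basis_step B)"
  unfolding lin_indep_def
proof (intro allI impI)
  fix cs
  assume "length cs = length (basis_step B)
    \<and> lincomb (n * Suc k) cs (basis_step B) = vzero (n * Suc k)"
  then have cs: "length cs = Suc k"
    and zero: "lincomb (n * Suc k) cs (basis_step B) = vzero (n * Suc k)"
    by (simp_all add: length_basis_step)
  show "\<forall>c\<in>set cs. c = 0"
  proof (rule ccontr)
    assume "\<not> (\<forall>c\<in>set cs. c = 0)"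
    then obtain m where m: "m < Suc k" "cs ! m \<noteq> 0" using cs by (auto simp: in_set_conv_nth)
    define r :: nat where "r = (if m = 0 then 1 else 0)"
    have "r < Suc k" "r \<noteq> m" using k_pos by (auto simp: r_def)
    then have "nonzero_vec (lincomb n (block_coeffs k cs r) B)" using m block_nonzero_iff by blast
    then have "nonzero_vec (lincomb (n * Suc k) cs (basis_step B))"
      unfolding lincomb_basis_step[OF cs] nonzero_concat using \<open>r < Suc k\<close> by auto
    then show False using zero by (metis nonzero_vec_def vzero_def in_set_replicate)
  qed
qed

lemma wt_vsum_basis_step: "wt (vsum (n * Suc k) (basis_step B)) = Suc k * wt (vsum n B)"
proof -
  have ones: "block_coeffs k (replicate (Suc k) 1) r = replicate k 1" for r
    by (rule nth_equalityI)
      (simp_all add: length_block_coeffs length_B nth_block_coeffs cyclic_diff_less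
        del: replicate_Suc)
  have "vsum (n * Suc k) (basis_step B) = lincomb (n * Suc k) (replicate (Suc k) 1) (basis_step B)"
    by (simp only: vsum_eq_lincomb_ones length_basis_step)
  also have "\<dots> = concat (map (\<lambda>r. lincomb n (replicate k 1) B) [0..<Suc k])"
    by (simp only: lincomb_basis_step[OF length_replicate] ones)
  also have "lincomb n (replicate k 1) B = vsum n B"
    by (simp add: vsum_eq_lincomb_ones length_B)
  finally show ?thesis by (simp add: wt_concat_map_upt)
qed

lemma wt_basis_step_elems:
  assumes u: "\<forall>b\<in>set B. wt b = u"
  shows "\<forall>b\<in>set (basis_step B). wt b = k * u"
proof
  fix b assume "b \<in> set (basis_step B)"
  then obtain m where m: "m < Suc k" "b = basis_step B ! m"
    by (auto simp: in_set_conv_nth length_basis_step)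
  have block_wt: "wt (basis_vec (cyclic_diff (Suc k) r m)) = (if r = m then 0 else u)"
    if r: "r < Suc k" for r
  proof (cases "r = m")
    case False
    then obtain j where "cyclic_diff (Suc k) r m = Suc j"
      using cyclic_diff_eq_0_iff[OF r m(1)] not0_implies_Suc by metis
    moreover have "j < k" using cyclic_diff_less[of "Suc k" r m] calculation by simp
    ultimately show ?thesis using False u length_B by (simp add: basis_vec_def)
  qed (simp add: basis_vec_def cyclic_diff_def wt_vzero)
  have "wt b = (\<Sum>r<Suc k. wt (basis_vec (cyclic_diff (Suc k) r m)))"
    by (simp add: m basis_step_nth wt_concat_map_upt)
  also have "\<dots> = (\<Sum>r\<in>{..<Suc k} - {m}. u)"
    using m(1) by (subst sum.remove[of _ m]) (auto intro!: sum.cong simp: block_wt)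
  finally show "wt b = k * u" using m(1) by (simp add: card_Diff_singleton)
qed

lemma wt_lincomb_basis_step:
  "length cs = Suc k \<Longrightarrow>
   wt (lincomb (n * Suc k) cs (basis_step B)) = (\<Sum>r<Suc k. wt (lincomb n (block_coeffs k cs r) B))"
  by (subst lincomb_basis_step) (simp_all add: wt_concat_map_upt)

lemma nonzero_span_basis_stepE:
  assumes "x \<in> span (n * Suc k) (basis_step B)" "nonzero_vec x"
  obtains cs m where "length cs = Suc k" "x = lincomb (n * Suc k) cs (basis_step B)"
    and "m < Suc k" "cs ! m \<noteq> 0"
proof -
  obtain cs where cs: "length cs = Suc k" "x = lincomb (n * Suc k) cs (basis_step B)"
    using assms(1) by (auto simp: mem_span_iff length_basis_step)
  moreover have "length cs = length (basis_step B)" using cs(1) by (simp add: length_basis_step)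
  ultimately obtain m where "m < Suc k" "cs ! m \<noteq> 0"
    using assms(2) lincomb_nonzero_iff[OF length_basis_step_elems _ lin_indep_basis_step]
    by (auto simp: length_basis_step)
  with cs that show ?thesis by blast
qed

context
  fixes e :: nat
  assumes wt_span_ge: "\<forall>x\<in>span n B. nonzero_vec x \<longrightarrow> e \<le> wt x"
begin

lemma wt_block_ge:
  assumes "r < Suc k" "\<exists>m<Suc k. m \<noteq> r \<and> cs ! m \<noteq> 0"
  shows "e \<le> wt (lincomb n (block_coeffs k cs r) B)"
proof -
  have "lincomb n (block_coeffs k cs r) B \<in> span n B"
    unfolding mem_span_iff using length_block_coeffs by blast
  then show ?thesis using wt_span_ge block_nonzero_iff assms by blast
qed

lemma wt_span_basis_step_ge:
  assumes "x \<in> span (n * Suc k) (basis_step B)" "nonzero_vec x"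
  shows "k * e \<le> wt x"
proof -
  obtain cs m where cs: "length cs = Suc k" "x = lincomb (n * Suc k) cs (basis_step B)"
    and m: "m < Suc k" "cs ! m \<noteq> 0"
    using nonzero_span_basis_stepE[OF assms] .
  have "k * e = (\<Sum>r\<in>{..<Suc k} - {m}. e)" using m(1) by (simp add: card_Diff_singleton)
  also have "\<dots> \<le> (\<Sum>r\<in>{..<Suc k} - {m}. wt (lincomb n (block_coeffs k cs r) B))"
    using m by (intro sum_mono wt_block_ge) auto
  also have "\<dots> \<le> (\<Sum>r<Suc k. wt (lincomb n (block_coeffs k cs r) B))"
    by (intro sum_mono2) auto
  also have "\<dots> = wt x" using cs wt_lincomb_basis_step by simp
  finally show ?thesis .
qed

lemma wt_span_basis_step_ge_bounded:
  assumes u: "\<forall>b\<in>set B. wt b = u"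
    and x: "x \<in> span (n * Suc k) (basis_step B)" "nonzero_vec x"
  shows "min (Suc k * e) (k * u) \<le> wt x"
proof -
  obtain cs m where cs: "length cs = Suc k" "x = lincomb (n * Suc k) cs (basis_step B)"
    and m: "m < Suc k" "cs ! m \<noteq> 0"
    using nonzero_span_basis_stepE[OF x] .
  show ?thesis
  proof (cases "\<exists>m'<Suc k. m' \<noteq> m \<and> cs ! m' \<noteq> 0")
    case True
    then have "(\<Sum>r<Suc k. e) \<le> (\<Sum>r<Suc k. wt (lincomb n (block_coeffs k cs r) B))"
      using m by (intro sum_mono wt_block_ge) auto
    then show ?thesis using cs wt_lincomb_basis_step by simp
  next
    case False
    then have "x = smult (cs ! m) (basis_step B ! m)"
      using cs m lincomb_eq_smult_nth[OF length_basis_step_elems, of cs m]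
      by (metis length_basis_step)
    then have "wt x = k * u"
      using m wt_smult wt_basis_step_elems[OF u] by (metis length_basis_step nth_mem)
    then show ?thesis by simp
  qed
qed

end

end

lemma real_mult_one_plus_div_le_iff:
  "0 < K \<Longrightarrow> real a * (1 + real b / real K) \<le> real c \<longleftrightarrow> a * (K + b) \<le> c * (K::nat)"
proof -
  assume "0 < K"
  then have "real a * (1 + real b / real K) = real (a * (K + b)) / real K"
    by (simp add: field_simps)
  with \<open>0 < K\<close> show ?thesis by (simp add: divide_le_eq del: of_nat_mult flip: of_nat_mult)
qed

lemma prod_upto_Suc: "(\<Prod>j=1..Suc t. (k::nat) + j) = (\<Prod>j=1..t. k + j) * Suc (k + t)"
  by simp

lemma prod_pred_upto_Suc: "(\<Prod>j=1..Suc t. (k::nat) + j - 1) = (\<Prod>j=1..t. k + j - 1) * (k + t)"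
  by simp

lemma mult_prod_pred_eq: "(k + t) * (\<Prod>j=1..t. k + j - 1) = k * (\<Prod>j=1..t. (k::nat) + j)"
proof (induction t)
  case (Suc t)
  have "(k + Suc t) * (\<Prod>j=1..Suc t. k + j - 1) = (k + Suc t) * ((k + t) * (\<Prod>j=1..t. k + j - 1))"
    by simp
  also have "\<dots> = k * (\<Prod>j=1..Suc t. k + j)"
    by (simp only: Suc.IH prod_upto_Suc) (simp add: ac_simps)
  finally show ?case .
qed simp

lemma Basis_it_Suc: "Basis_it B (Suc t) = basis_step (Basis_it B t)"
  by (simp add: Basis_it_def)

context code_basis
begin

lemma code_basis_Basis_it: "code_basis (Basis_it B t) (n * (\<Prod>j=1..t. k + j)) (k + t)"
proof (induction t)
  case 0
  show ?case using code_basis_axioms by (simp add: Basis_it_def)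
next
  case (Suc t)
  then interpret it: code_basis "Basis_it B t" "n * (\<Prod>j=1..t. k + j)" "k + t" .
  show ?case
    unfolding Basis_it_Suc prod_upto_Suc mult.assoc[symmetric]
    using it.length_basis_step it.length_basis_step_elems it.lin_indep_basis_step k_pos
    by unfold_locales simp_all
qed

lemma wt_vsum_Basis_it:
  "wt (vsum (n * (\<Prod>j=1..t. k + j)) (Basis_it B t)) = (\<Prod>j=1..t. k + j) * wt (vsum n B)"
proof (induction t)
  case (Suc t)
  interpret it: code_basis "Basis_it B t" "n * (\<Prod>j=1..t. k + j)" "k + t"
    by (rule code_basis_Basis_it)
  show ?case
    unfolding Basis_it_Suc prod_upto_Suc mult.assoc[symmetric]
    using it.wt_vsum_basis_step Suc.IH by (simp add: algebra_simps)
qed (simp add: Basis_it_def)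

lemma wt_Basis_it_elems:
  assumes "\<forall>b\<in>set B. wt b = u"
  shows "\<forall>b\<in>set (Basis_it B t). wt b = u * (\<Prod>j=1..t. k + j - 1)"
proof (induction t)
  case (Suc t)
  interpret it: code_basis "Basis_it B t" "n * (\<Prod>j=1..t. k + j)" "k + t"
    by (rule code_basis_Basis_it)
  show ?case
    using it.wt_basis_step_elems[OF Suc.IH] by (simp add: Basis_it_Suc prod_pred_upto_Suc ac_simps)
qed (simp add: Basis_it_def assms)

lemma wt_span_Basis_it_ge:
  assumes "\<forall>x\<in>span n B. nonzero_vec x \<longrightarrow> e \<le> wt x"
  shows "\<forall>x\<in>span (n * (\<Prod>j=1..t. k + j)) (Basis_it B t).
           nonzero_vec x \<longrightarrow> e * (\<Prod>j=1..t. k + j - 1) \<le> wt x"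
proof (induction t)
  case (Suc t)
  interpret it: code_basis "Basis_it B t" "n * (\<Prod>j=1..t. k + j)" "k + t"
    by (rule code_basis_Basis_it)
  show ?case
    unfolding Basis_it_Suc prod_upto_Suc prod_pred_upto_Suc mult.assoc[symmetric]
    using it.wt_span_basis_step_ge[OF Suc.IH] by (simp add: ac_simps)
qed (simp add: Basis_it_def assms)

lemma wt_span_Basis_it_ge_bounded:
  assumes e: "\<forall>x\<in>span n B. nonzero_vec x \<longrightarrow> e \<le> wt x" and u: "\<forall>b\<in>set B. wt b = u"
    and eu: "e * (k + i) \<le> u * k"
  shows "t \<le> i \<Longrightarrow> \<forall>x\<in>span (n * (\<Prod>j=1..t. k + j)) (Basis_it B t).
           nonzero_vec x \<longrightarrow> e * (\<Prod>j=1..t. k + j) \<le> wt x"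
proof (induction t)
  case (Suc t)
  interpret it: code_basis "Basis_it B t" "n * (\<Prod>j=1..t. k + j)" "k + t"
    by (rule code_basis_Basis_it)
  let ?P = "\<Prod>j=1..t. k + j" and ?Q = "\<Prod>j=1..t. k + j - 1"
  have "Suc (k + t) * (e * ?P) \<le> (k + i) * (e * ?P)"
    using Suc.prems by (intro mult_right_mono) auto
  also have "\<dots> \<le> (u * k) * ?P"
    using eu by (simp add: mult_right_mono ac_simps)
  also have "\<dots> = (k + t) * (u * ?Q)"
    using mult_prod_pred_eq[of k t] by (simp add: ac_simps)
  finally have "\<forall>x\<in>span (n * ?P * Suc (k + t)) (basis_step (Basis_it B t)).
      nonzero_vec x \<longrightarrow> Suc (k + t) * (e * ?P) \<le> wt x"
    using it.wt_span_basis_step_ge_bounded[OF Suc.IH wt_Basis_it_elems[OF u]] Suc.prems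
    by fastforce
  then show ?case
    unfolding Basis_it_Suc prod_upto_Suc mult.assoc[symmetric] by (simp add: algebra_simps)
qed (simp add: Basis_it_def e)

lemma min_dist_span_le_wt: "x \<in> span n B \<Longrightarrow> nonzero_vec x \<Longrightarrow> min_dist (span n B) \<le> wt x"
  using min_dist_le_wt length_mem_span[OF length_basis_vecs] by blast

lemma le_min_dist_span:
  "\<forall>x\<in>span n B. nonzero_vec x \<longrightarrow> e \<le> wt x \<Longrightarrow> e \<le> min_dist (span n B)"
  using le_min_dist[OF _ vsum_mem_span nonzero_vsum[OF length_basis_vecs lin_indep_B]]
    length_mem_span[OF length_basis_vecs] length_B k_pos
  by auto

lemma Code_it_eq_span: "Code_it B t = span (n * (\<Prod>j=1..t. k + j)) (Basis_it B t)"
  using code_basis.length_hd_B[OF code_basis_Basis_it] by (simp add: Code_it_def)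

lemma is_lin_code_Code_it:
  "is_lin_code (n * (\<Prod>j=1..t. k + j)) (k + t) (min_dist (Code_it B t)) (Code_it B t)"
  using code_basis_Basis_it[of t]
  unfolding is_lin_code_def is_ordered_basis_def code_basis_def Code_it_eq_span by blast

lemma min_dist_Code_it_ge:
  "min_dist (span n B) * (\<Prod>j=1..t. k + j - 1) \<le> min_dist (Code_it B t)"
  unfolding Code_it_eq_span
  by (intro code_basis.le_min_dist_span[OF code_basis_Basis_it] wt_span_Basis_it_ge)
    (simp add: min_dist_span_le_wt)

context
  fixes d u i :: nat
  assumes bounded: "is_bounded n d u B" and min_dist_B: "min_dist (span n B) = d"
    and du: "d * (k + i) \<le> u * k"
begin

lemma wt_vsum_Basis_it_eq: "wt (vsum (n * (\<Prod>j=1..i. k + j)) (Basis_it B i)) = d * (\<Prod>j=1..i. k + j)"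
  using wt_vsum_Basis_it bounded by (simp add: is_bounded_def)

lemma min_dist_Code_it_eq: "min_dist (Code_it B i) = d * (\<Prod>j=1..i. k + j)"
proof (rule antisym)
  interpret it: code_basis "Basis_it B i" "n * (\<Prod>j=1..i. k + j)" "k + i"
    by (rule code_basis_Basis_it)
  have "nonzero_vec (vsum (n * (\<Prod>j=1..i. k + j)) (Basis_it B i))"
    using it.length_B it.k_pos by (intro nonzero_vsum it.length_basis_vecs it.lin_indep_B) auto
  then show "min_dist (Code_it B i) \<le> d * (\<Prod>j=1..i. k + j)"
    unfolding Code_it_eq_span using it.min_dist_span_le_wt[OF vsum_mem_span] wt_vsum_Basis_it_eq
    by simp
  show "d * (\<Prod>j=1..i. k + j) \<le> min_dist (Code_it B i)"
    unfolding Code_it_eq_span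
    using bounded du wt_span_Basis_it_ge_bounded[of d u i i] min_dist_span_le_wt min_dist_B
    by (intro it.le_min_dist_span) (auto simp: is_bounded_def)
qed

lemma is_bounded_Basis_it_iff:
  "is_bounded (n * (\<Prod>j=1..i. k + j)) (min_dist (Code_it B i)) (u * (\<Prod>j=1..i. k + j - 1))
     (Basis_it B i) \<longleftrightarrow> d * (k + (i + 1)) \<le> u * k"
proof -
  let ?P = "\<Prod>j=1..i. k + j" and ?Q = "\<Prod>j=1..i. k + j - 1"
  have "\<forall>b\<in>set (Basis_it B i). wt b = u * ?Q"
    using bounded wt_Basis_it_elems by (simp add: is_bounded_def)
  then have "is_bounded (n * ?P) (min_dist (Code_it B i)) (u * ?Q) (Basis_it B i)
      \<longleftrightarrow> real (d * ?P) * (1 + real 1 / real (k + i)) \<le> real (u * ?Q)"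
    using code_basis.length_B[OF code_basis_Basis_it] wt_vsum_Basis_it_eq
    by (simp add: is_bounded_def min_dist_Code_it_eq del: of_nat_mult)
  also have "\<dots> \<longleftrightarrow> d * ?P * (k + i + 1) \<le> u * ?Q * (k + i)"
    using k_pos by (intro real_mult_one_plus_div_le_iff) simp
  also have "u * ?Q * (k + i) = ?P * (u * k)"
    using mult_prod_pred_eq[of k i] by (simp add: ac_simps)
  also have "d * ?P * (k + i + 1) = ?P * (d * (k + (i + 1)))"
    by (simp add: algebra_simps)
  also have "?P * (d * (k + (i + 1))) \<le> ?P * (u * k) \<longleftrightarrow> d * (k + (i + 1)) \<le> u * k"
    by (simp add: prod_pos)
  finally show ?thesis .
qed

end

end

theorem proposition3p5:
  fixes B :: "'a::field list list" and C :: "'a list set" and n k d i :: nat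
  assumes "i \<ge> 1" and "k \<ge> 1"
    and "is_lin_code n k d C"
    and "is_ordered_basis n C B" and "length B = k"
  shows "is_lin_code (n * (\<Prod>j=1..i. k + j)) (k + i) (min_dist (Code_it B i)) (Code_it B i)
         \<and> min_dist (Code_it B i) \<ge> d * (\<Prod>j=1..i. k + j - 1)
         \<and> (\<forall>u::nat. u \<ge> 1 \<and> is_bounded n d u B \<and> real u \<ge> real d * (1 + real i / real k)
               \<longrightarrow> min_dist (Code_it B i) = d * (\<Prod>j=1..i. k + j)
                 \<and> (is_bounded (n * (\<Prod>j=1..i. k + j)) (min_dist (Code_it B i))
                        (u * (\<Prod>j=1..i. k + j - 1)) (Basis_it B i)
                    \<longleftrightarrow> real u \<ge> real d * (1 + real (i + 1) / real k)))"
proof -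
  interpret code_basis B n k
    using assms(2,4,5) by unfold_locales (auto simp: is_ordered_basis_def)
  have d: "min_dist (span n B) = d"
    using assms(3,4) by (simp add: is_lin_code_def is_ordered_basis_def)
  have real_iff: "real d * (1 + real t / real k) \<le> real u \<longleftrightarrow> d * (k + t) \<le> u * k" for t u
    using k_pos by (rule real_mult_one_plus_div_le_iff)
  show ?thesis
  proof (intro conjI allI impI)
    show "is_lin_code (n * (\<Prod>j=1..i. k + j)) (k + i) (min_dist (Code_it B i)) (Code_it B i)"
      by (rule is_lin_code_Code_it)
    show "d * (\<Prod>j=1..i. k + j - 1) \<le> min_dist (Code_it B i)"
      using min_dist_Code_it_ge[of i] by (simp add: d)
    fix u assume "1 \<le> u \<and> is_bounded n d u B \<and> real d * (1 + real i / real k) \<le> real u"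
    then have bounded: "is_bounded n d u B" and du: "d * (k + i) \<le> u * k"
      by (simp_all add: real_iff)
    show "min_dist (Code_it B i) = d * (\<Prod>j=1..i. k + j)"
      by (rule min_dist_Code_it_eq[OF bounded d du])
    show "is_bounded (n * (\<Prod>j=1..i. k + j)) (min_dist (Code_it B i))
        (u * (\<Prod>j=1..i. k + j - 1)) (Basis_it B i) \<longleftrightarrow>
      real d * (1 + real (i + 1) / real k) \<le> real u"
      unfolding real_iff by (rule is_bounded_Basis_it_iff[OF bounded d du])
  qed
qed

end
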